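(* Let $n \geq 3$ be an integer and let $D_{2n} = \langle a, b \mid a^n = b^2 = e,\ ab = ba^{-1} \rangle$ be the dihedral group of order $2n$. Then the order supergraph $\mathcal{S}(D_{2n})$ is cyclically separable if and only if all of the following hold: (i) $n$ is not a power of $2$; (ii) $n \geq 5$; (iii) $n \neq 6$ and $n \neq 12$.
   Context: All graphs are simple and undirected. For a finite group $G$, the order supergraph $\mathcal{S}(G)$ is the graph with vertex set $G$ in which two distinct vertices $x,y$ are adjacent if and only if the order of $x$ divides the order of $y$ or the order of $y$ divides the order of $x$. For a graph $\Gamma$, a vertex cutset is a set $S$ of vertices such that $\Gamma - S$ is disconnected; a cyclic vertex cutset is a vertex cutset $S$ such that $\Gamma - S$ has at least two connected components each of which contains a cycle. $\Gamma$ is called cyclically separable if it has a cyclic vertex cutset. *)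

theory Defs
  imports "HOL-Algebra.Multiplicative_Group"
begin

text \<open>Dihedral group of order 2n, concretely: the pair (i, j) with i < n, j < 2
  stands for a^i b^j, where a = (1,0) and b = (0,1).  Multiplication follows from
  b a^k = a^(-k) b:  a^i b^j a^k b^l = a^(i + (-1)^j k) b^(j+l).\<close>

definition dihedral :: "nat \<Rightarrow> (nat \<times> nat) monoid" where
  "dihedral n = \<lparr> carrier = {(i, j). i < n \<and> j < 2},
     mult = (\<lambda>(i, j) (k, l).
        ((i + (if j = 0 then k else n - k)) mod n, (j + l) mod 2)),
     one = (0, 0) \<rparr>"

definition order_supergraph_adj :: "('a, 'b) monoid_scheme \<Rightarrow> 'a \<Rightarrow> 'a \<Rightarrow> bool" where
  "order_supergraph_adj G x y \<longleftrightarrow>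
     x \<in> carrier G \<and> y \<in> carrier G \<and> x \<noteq> y \<and>
     (group.ord G x dvd group.ord G y \<or> group.ord G y dvd group.ord G x)"

definition induced_adj :: "('a \<Rightarrow> 'a \<Rightarrow> bool) \<Rightarrow> 'a set \<Rightarrow> 'a \<Rightarrow> 'a \<Rightarrow> bool" where
  "induced_adj E W x y \<longleftrightarrow> x \<in> W \<and> y \<in> W \<and> E x y"

definition component :: "('a \<Rightarrow> 'a \<Rightarrow> bool) \<Rightarrow> 'a set \<Rightarrow> 'a \<Rightarrow> 'a set" where
  "component E W x = {y. (induced_adj E W)\<^sup>*\<^sup>* x y}"

definition has_cycle_in :: "('a \<Rightarrow> 'a \<Rightarrow> bool) \<Rightarrow> 'a set \<Rightarrow> bool" where
  "has_cycle_in E C \<longleftrightarrow> (\<exists>cs. length cs \<ge> 3 \<and> distinct cs \<and> set cs \<subseteq> C \<and>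
      (\<forall>i < length cs. E (cs ! i) (cs ! ((i + 1) mod length cs))))"

definition cyclic_vertex_cutset :: "'a set \<Rightarrow> ('a \<Rightarrow> 'a \<Rightarrow> bool) \<Rightarrow> 'a set \<Rightarrow> bool" where
  "cyclic_vertex_cutset V E S \<longleftrightarrow> S \<subseteq> V \<and>
     (\<exists>x y. x \<in> V - S \<and> y \<in> V - S \<and>
        component E (V - S) x \<noteq> component E (V - S) y \<and>
        has_cycle_in E (component E (V - S) x) \<and>
        has_cycle_in E (component E (V - S) y))"

definition cyclically_separable :: "'a set \<Rightarrow> ('a \<Rightarrow> 'a \<Rightarrow> bool) \<Rightarrow> bool" where
  "cyclically_separable V E \<longleftrightarrow> (\<exists>S. cyclic_vertex_cutset V E S)"

end

theory Submission
  imports Defs "HOL-Computational_Algebra.Primes"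
begin

text \<open>The rotation a^i of D_2n has order n / gcd(i, n) and every reflection has order 2, so
  the elements of any fixed order form a clique of the order supergraph. If n = 2^k all orders
  are powers of 2 and the graph is complete. If n divides 12, the elements of order 1, 2, 6, 12
  form a clique and the at most two elements of order 3 (resp. 4) are adjacent only to that clique
  and to each other, so every component containing a cycle meets the clique. In every other case
  either n has an odd divisor m \<ge> 5, and the reflections together with the rotations of order m
  give two cliques of size at least 3 with no edges between them, or 24 divides n and the elements
  of orders 8 and 12 do the same; deleting all remaining vertices separates the two cliques.\<close>

lemma three_distinct_if_three_le_card:
  assumes "3 \<le> card A"
  obtains a b c where "a \<in> A" "b \<in> A" "c \<in> A" "a \<noteq> b" "b \<noteq> c" "a \<noteq> c"
proof -
  obtain T where "T \<subseteq> A" "card T = 3"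
    using assms obtain_subset_with_card_n by metis
  then show ?thesis
    using that by (auto simp: card_3_iff)
qed

lemma three_le_card_if_three_elements:
  "{a, b, c} \<subseteq> A \<Longrightarrow> finite A \<Longrightarrow> a \<noteq> b \<Longrightarrow> b \<noteq> c \<Longrightarrow> a \<noteq> c \<Longrightarrow> 3 \<le> card A"
  using card_mono[of A "{a, b, c}"] by simp

lemma card_le_2_if_subset_doubleton:
  assumes "A \<subseteq> {a, b}"
  shows "card A \<le> 2"
proof -
  have "card A \<le> card {a, b}" using assms by (rule card_mono[rotated]) simp
  also have "\<dots> \<le> 2" by (simp add: card_insert_if)
  finally show ?thesis .
qed

lemma dvd_mult_iff_div_gcd_dvd:
  fixes i m n :: nat
  assumes "0 < n"
  shows "n dvd i * m \<longleftrightarrow> n div gcd i n dvd m"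
proof -
  define g where "g = gcd i n"
  obtain i' where i': "i = g * i'"
    unfolding g_def by (metis gcd_dvd1 dvdE)
  obtain n' where n': "n = g * n'"
    unfolding g_def by (metis gcd_dvd2 dvdE)
  have "0 < g" using assms by (simp add: g_def)
  have "coprime n' i'"
    using div_gcd_coprime[of i n] assms i' n' \<open>0 < g\<close> unfolding g_def[symmetric]
    by (simp add: coprime_commute)
  have "n dvd i * m \<longleftrightarrow> n' dvd i' * m" using i' n' \<open>0 < g\<close> by (simp add: mult.assoc)
  also have "\<dots> \<longleftrightarrow> n' dvd m"
    using \<open>coprime n' i'\<close> by (simp add: coprime_dvd_mult_right_iff mult.commute)
  also have "n' = n div g" using n' \<open>0 < g\<close> by simp
  finally show ?thesis by (simp add: g_def)
qed

lemma divisors_12: "(d::nat) dvd 12 \<Longrightarrow> d \<in> {1, 2, 3, 4, 6, 12}"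
proof -
  assume d: "d dvd 12"
  then have "d \<le> 12" by (simp add: dvd_imp_le)
  then have "d = 0 \<or> d = 1 \<or> d = 2 \<or> d = 3 \<or> d = 4 \<or> d = 5 \<or> d = 6 \<or> d = 7 \<or> d = 8 \<or>
      d = 9 \<or> d = 10 \<or> d = 11 \<or> d = 12" by presburger
  then show ?thesis using d by auto
qed

lemma odd_divisor_ge_5_or_24_dvd:
  fixes n :: nat
  assumes "0 < n" "\<nexists>k. n = 2 ^ k" "\<not> n dvd 12"
  shows "(\<exists>m. odd m \<and> 5 \<le> m \<and> m dvd n) \<or> 24 dvd n"
proof -
  define k where "k = multiplicity 2 n"
  obtain m where n: "n = 2 ^ k * m" and "odd m"
    using multiplicity_decompose'[of n 2] assms(1) unfolding k_def by auto
  have "m = 1 \<or> m = 3 \<or> 5 \<le> m"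
    using \<open>odd m\<close> by presburger
  then consider "m = 1" | "m = 3" | "5 \<le> m"
    by blast
  then show ?thesis
  proof cases
    case 1
    then show ?thesis using assms(2) n by simp
  next
    case 2
    have "\<not> k < 3"
    proof
      assume "k < 3"
      then have "k = 0 \<or> k = 1 \<or> k = 2" by auto
      then show False using assms(3) n \<open>m = 3\<close> by auto
    qed
    then have "k = (k - 3) + 3" by simp
    then have "2 ^ k = 2 ^ (k - 3) * (2::nat) ^ 3"
      by (metis power_add)
    then show ?thesis using n \<open>m = 3\<close> by simp
  next
    case 3
    then show ?thesis using \<open>odd m\<close> n by auto
  qed
qed

definition clique :: "('a \<Rightarrow> 'a \<Rightarrow> bool) \<Rightarrow> 'a set \<Rightarrow> bool" where
  "clique E A \<longleftrightarrow> (\<forall>a\<in>A. \<forall>b\<in>A. a \<noteq> b \<longrightarrow> E a b)"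

lemma component_self: "x \<in> component E W x"
  by (simp add: component_def)

lemma component_adj_closed:
  "a \<in> component E W x \<Longrightarrow> induced_adj E W a b \<Longrightarrow> b \<in> component E W x"
  by (simp add: component_def)

lemma component_subset_if_closed:
  assumes "x \<in> A" and closed: "\<And>a b. a \<in> A \<Longrightarrow> induced_adj E W a b \<Longrightarrow> b \<in> A"
  shows "component E W x \<subseteq> A"
proof
  fix y assume "y \<in> component E W x"
  then have "(induced_adj E W)\<^sup>*\<^sup>* x y" by (simp add: component_def)
  then show "y \<in> A" by (induction rule: rtranclp_induct) (use assms in auto)
qed

lemma component_subset: "x \<in> W \<Longrightarrow> component E W x \<subseteq> W"
  by (rule component_subset_if_closed) (auto simp: induced_adj_def)

lemma component_eq:
  assumes sym: "\<And>a b. E a b \<Longrightarrow> E b a" and "y \<in> component E W x"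
  shows "component E W y = component E W x"
proof -
  have sym_adj: "symp (induced_adj E W)"
    using sym by (auto simp: symp_def induced_adj_def)
  have "(induced_adj E W)\<^sup>*\<^sup>* x y" using assms(2) by (simp add: component_def)
  moreover have "(induced_adj E W)\<^sup>*\<^sup>* y x"
    using calculation sym_adj by (simp add: symp_rtranclp[THEN sympD])
  ultimately show ?thesis
    unfolding component_def by (auto intro: rtranclp_trans)
qed

lemma component_eq_if_adjacent:
  assumes sym: "\<And>a b. E a b \<Longrightarrow> E b a"
    and a: "a \<in> component E W x" and b: "b \<in> component E W y"
    and "a \<in> W" "b \<in> W" "a = b \<or> E a b"
  shows "component E W x = component E W y"
proof -
  have "b \<in> component E W x"
  proof (cases "a = b")
    case False
    then have "induced_adj E W a b" using assms(4-6) by (simp add: induced_adj_def)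
    then show ?thesis by (rule component_adj_closed[OF a])
  qed (use a in simp)
  then show ?thesis
    using component_eq[of E, OF sym] b by metis
qed

lemma three_le_card_if_has_cycle_in:
  assumes "has_cycle_in E C" "finite C"
  shows "3 \<le> card C"
proof -
  obtain cs where "3 \<le> length cs" "distinct cs" "set cs \<subseteq> C"
    using assms(1) by (auto simp: has_cycle_in_def)
  then have "card (set cs) \<le> card C" "card (set cs) = length cs"
    using card_mono[OF assms(2)] distinct_card by simp_all
  then show ?thesis using \<open>3 \<le> length cs\<close> by simp
qed

lemma has_cycle_in_if_clique:
  assumes "clique E C" "3 \<le> card C"
  shows "has_cycle_in E C"
proof -
  obtain a b c where abc: "a \<in> C" "b \<in> C" "c \<in> C" "a \<noteq> b" "b \<noteq> c" "a \<noteq> c"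
    using three_distinct_if_three_le_card[OF assms(2)] .
  show ?thesis
    unfolding has_cycle_in_def
  proof (intro exI[of _ "[a, b, c]"] conjI allI impI)
    fix i assume "i < length [a, b, c]"
    then have "i = 0 \<or> i = 1 \<or> i = 2" by auto
    then show "E ([a, b, c] ! i) ([a, b, c] ! ((i + 1) mod length [a, b, c]))"
      using assms(1) abc by (auto simp: clique_def)
  qed (use abc in auto)
qed

lemma cyclically_separable_if_separated_cliques:
  assumes sym: "\<And>a b. E a b \<Longrightarrow> E b a"
    and "A \<subseteq> V" "B \<subseteq> V" "clique E A" "clique E B" "3 \<le> card A" "3 \<le> card B"
    and no_edge: "\<And>a b. a \<in> A \<Longrightarrow> b \<in> B \<Longrightarrow> \<not> E a b"
  shows "cyclically_separable V E"
proof -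
  define X where "X = A \<union> B"
  have component_clique: "component E X c = C" if "C = A \<or> C = B" "c \<in> C" for C c
  proof
    show "component E X c \<subseteq> C"
    proof (rule component_subset_if_closed[OF \<open>c \<in> C\<close>])
      fix a b assume "a \<in> C" "induced_adj E X a b"
      then have "b \<in> A \<union> B" "E a b" by (auto simp: induced_adj_def X_def)
      then show "b \<in> C"
        using that \<open>a \<in> C\<close> no_edge[of a b] no_edge[of b a] sym[of a b] by auto
    qed
    show "C \<subseteq> component E X c"
    proof
      fix d assume "d \<in> C"
      then have "d = c \<or> induced_adj E X c d"
        using that assms(4,5) by (auto simp: clique_def induced_adj_def X_def)
      then show "d \<in> component E X c"
        using component_self component_adj_closed by metis
    qed
  qed
  obtain a a' where a: "a \<in> A" "a' \<in> A" "a \<noteq> a'"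
    using three_distinct_if_three_le_card[OF assms(6)] by metis
  obtain b where b: "b \<in> B"
    using three_distinct_if_three_le_card[OF assms(7)] by metis
  have "A \<inter> B = {}"
  proof (rule ccontr)
    assume "A \<inter> B \<noteq> {}"
    then obtain u where u: "u \<in> A" "u \<in> B" by blast
    obtain w where "w \<in> A" "w \<noteq> u"
      using a by blast
    then show False
      using no_edge[OF _ u(2)] u(1) assms(4) by (auto simp: clique_def)
  qed
  have "cyclic_vertex_cutset V E (V - X)"
    unfolding cyclic_vertex_cutset_def
  proof (intro conjI exI)
    have X: "V - (V - X) = X" using assms(2,3) X_def by auto
    show "a \<in> V - (V - X)" "b \<in> V - (V - X)" using a b X X_def by auto
    show "component E (V - (V - X)) a \<noteq> component E (V - (V - X)) b"
      using component_clique[of A a] component_clique[of B b] a b \<open>A \<inter> B = {}\<close> X by auto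
    show "has_cycle_in E (component E (V - (V - X)) a)" "has_cycle_in E (component E (V - (V - X)) b)"
      using component_clique[of A a] component_clique[of B b] a b X
        has_cycle_in_if_clique[OF assms(4,6)] has_cycle_in_if_clique[OF assms(5,7)] by auto
  qed auto
  then show ?thesis
    unfolding cyclically_separable_def by blast
qed

text \<open>A component containing a cycle has at least three vertices, so it cannot stay inside
  one of the small sets R; hence every such component meets the clique K.\<close>

lemma not_cyclically_separable_if_clique_and_pockets:
  assumes sym: "\<And>a b. E a b \<Longrightarrow> E b a"
    and "clique E K"
    and pocket: "\<And>v. v \<in> V - K \<Longrightarrow>
      \<exists>R. v \<in> R \<and> finite R \<and> card R \<le> 2 \<and> (\<forall>a\<in>R. \<forall>b. E a b \<longrightarrow> b \<in> K \<union> R)"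
  shows "\<not> cyclically_separable V E"
proof
  assume "cyclically_separable V E"
  then obtain S x y where xy: "x \<in> V - S" "y \<in> V - S"
    and ne: "component E (V - S) x \<noteq> component E (V - S) y"
    and cycles: "has_cycle_in E (component E (V - S) x)" "has_cycle_in E (component E (V - S) y)"
    by (auto simp: cyclically_separable_def cyclic_vertex_cutset_def)
  define X where "X = V - S"
  have meets_K: "component E X z \<inter> K \<noteq> {}"
    if "z \<in> X" "has_cycle_in E (component E X z)" for z
  proof
    let ?C = "component E X z"
    assume disjoint: "?C \<inter> K = {}"
    have "z \<in> V - K"
      using that(1) component_self[of z E X] disjoint X_def by blast
    then obtain R where R: "z \<in> R" "finite R" "card R \<le> 2"
      "\<forall>a\<in>R. \<forall>b. E a b \<longrightarrow> b \<in> K \<union> R"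
      using pocket by blast
    have "?C \<subseteq> ?C \<inter> R"
    proof (rule component_subset_if_closed)
      show "z \<in> ?C \<inter> R" using R(1) component_self[of z E X] by blast
      fix a b assume a: "a \<in> ?C \<inter> R" and ab: "induced_adj E X a b"
      then have "b \<in> ?C" using component_adj_closed[of a E X z b] by blast
      moreover have "b \<in> K \<union> R"
        using a ab R(4) by (auto simp: induced_adj_def)
      ultimately show "b \<in> ?C \<inter> R" using disjoint by blast
    qed
    then have "card ?C \<le> card R" "finite ?C"
      using card_mono[OF R(2)] finite_subset[OF _ R(2)] by auto
    then show False
      using three_le_card_if_has_cycle_in[OF that(2)] R(3) by simp
  qed
  have "component E X x \<inter> K \<noteq> {}" "component E X y \<inter> K \<noteq> {}"
    using meets_K xy cycles unfolding X_def by auto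
  then obtain a b where a: "a \<in> component E X x" "a \<in> K"
    and b: "b \<in> component E X y" "b \<in> K"
    by blast
  have "a \<in> X" "b \<in> X"
    using a(1) b(1) component_subset[of x X E] component_subset[of y X E] xy
    unfolding X_def by blast+
  moreover have "a = b \<or> E a b"
    using a(2) b(2) \<open>clique E K\<close> by (auto simp: clique_def)
  ultimately have "component E X x = component E X y"
    using component_eq_if_adjacent[of E, OF sym a(1) b(1)] by blast
  then show False using ne X_def by simp
qed

lemma not_cyclically_separable_if_complete:
  assumes "\<And>a b. E a b \<Longrightarrow> E b a" "clique E V"
  shows "\<not> cyclically_separable V E"
  using not_cyclically_separable_if_clique_and_pockets[of E V V] assms by blast

lemma order_supergraph_adj_sym:
  "order_supergraph_adj G a b \<Longrightarrow> order_supergraph_adj G b a"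
  by (auto simp: order_supergraph_adj_def)

lemma clique_order_supergraph_if_orders_comparable:
  assumes "\<And>a b. a \<in> A \<Longrightarrow> b \<in> A \<Longrightarrow>
    group.ord G a dvd group.ord G b \<or> group.ord G b dvd group.ord G a"
    and "A \<subseteq> carrier G"
  shows "clique (order_supergraph_adj G) A"
  using assms by (auto simp: clique_def order_supergraph_adj_def)

lemma order_supergraph_cyclically_separable_if_incomparable_orders:
  assumes "3 \<le> card {x \<in> carrier G. group.ord G x = p}"
    and "3 \<le> card {x \<in> carrier G. group.ord G x = q}"
    and "\<not> p dvd q" "\<not> q dvd p"
  shows "cyclically_separable (carrier G) (order_supergraph_adj G)"
proof (rule cyclically_separable_if_separated_cliques[where E = "order_supergraph_adj G",
      OF order_supergraph_adj_sym])
  show "clique (order_supergraph_adj G) {x \<in> carrier G. group.ord G x = p}"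
    "clique (order_supergraph_adj G) {x \<in> carrier G. group.ord G x = q}"
    by (rule clique_order_supergraph_if_orders_comparable; auto)+
  show "\<not> order_supergraph_adj G a b"
    if "a \<in> {x \<in> carrier G. group.ord G x = p}" "b \<in> {x \<in> carrier G. group.ord G x = q}" for a b
    using that assms(3,4) by (auto simp: order_supergraph_adj_def)
qed (use assms(1,2) in auto)

lemma order_supergraph_not_cyclically_separable_if_exponent_dvd_12:
  assumes "finite (carrier G)" and exp: "\<And>x. x \<in> carrier G \<Longrightarrow> group.ord G x dvd 12"
    and "card {x \<in> carrier G. group.ord G x = 3} \<le> 2"
    and "card {x \<in> carrier G. group.ord G x = 4} \<le> 2"
  shows "\<not> cyclically_separable (carrier G) (order_supergraph_adj G)"
proof (rule not_cyclically_separable_if_clique_and_pockets[where E = "order_supergraph_adj G",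
      OF order_supergraph_adj_sym])
  let ?o = "group.ord G"
  let ?K = "{x \<in> carrier G. ?o x \<in> {1, 2, 6, 12}}"
  show "clique (order_supergraph_adj G) ?K"
    by (rule clique_order_supergraph_if_orders_comparable) auto
  fix v assume v: "v \<in> carrier G - ?K"
  define R where "R = {x \<in> carrier G. ?o x = ?o v}"
  have ord_v: "?o v = 3 \<or> ?o v = 4"
    using v divisors_12[OF exp, of v] by auto
  have "v \<in> R" "finite R" "card R \<le> 2"
    using v assms(1) ord_v assms(3,4) unfolding R_def by auto
  moreover have "b \<in> ?K \<union> R" if "a \<in> R" "order_supergraph_adj G a b" for a b
  proof -
    have b: "b \<in> carrier G" and "?o a dvd ?o b \<or> ?o b dvd ?o a"
      using that(2) by (auto simp: order_supergraph_adj_def)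
    moreover have "?o b \<in> {1, 2, 3, 4, 6, 12}"
      using divisors_12[OF exp[OF b]] .
    ultimately show ?thesis
      using ord_v that(1) unfolding R_def by auto
  qed
  ultimately show "\<exists>R. v \<in> R \<and> finite R \<and> card R \<le> 2 \<and>
      (\<forall>a\<in>R. \<forall>b. order_supergraph_adj G a b \<longrightarrow> b \<in> ?K \<union> R)"
    by blast
qed

lemma (in group) order_supergraph_adj_if_prime_power_order:
  assumes "prime p" "order G = p ^ k" "x \<in> carrier G" "y \<in> carrier G" "x \<noteq> y"
  shows "order_supergraph_adj G x y"
proof -
  have "\<exists>i. ord z = p ^ i" if "z \<in> carrier G" for z
    using ord_dvd_group_order[OF that] assms(1,2) divides_primepow_nat by auto
  then obtain i j where "ord x = p ^ i" "ord y = p ^ j"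
    using assms(3,4) by blast
  then have "ord x dvd ord y \<or> ord y dvd ord x"
    by (metis le_imp_power_dvd nle_le)
  then show ?thesis
    using assms(3-5) by (simp add: order_supergraph_adj_def)
qed

lemma dihedral_carrier: "carrier (dihedral n) = {(i, j). i < n \<and> j < 2}"
  by (simp add: dihedral_def)

lemma carrier_dihedral_eq_product: "carrier (dihedral n) = {..<n} \<times> {..<2}"
  by (auto simp: dihedral_carrier)

lemma dihedral_mult:
  "(i, j) \<otimes>\<^bsub>dihedral n\<^esub> (k, l) = ((i + (if j = 0 then k else n - k)) mod n, (j + l) mod 2)"
  by (simp add: dihedral_def)

lemma dihedral_one: "\<one>\<^bsub>dihedral n\<^esub> = (0, 0)"
  by (simp add: dihedral_def)

lemma dihedral_mult_rotation_part:
  fixes i j k n :: nat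
  assumes "k \<le> n" "j < 2"
  shows "int ((i + (if j = 0 then k else n - k)) mod n) = (int i + (-1) ^ j * int k) mod int n"
proof (cases "j = 0")
  case False
  then have "j = 1" using assms by simp
  have "int ((i + (n - k)) mod n) = ((int i - int k) + int n) mod int n"
    using assms by (simp add: of_nat_mod algebra_simps)
  then show ?thesis using \<open>j = 1\<close> by simp
qed (simp add: of_nat_mod)

text \<open>The first coordinate of the associativity law; by the previous lemma it becomes an
  identity modulo n between expressions i + (-1)^j k.\<close>

lemma dihedral_mult_rotation_part_assoc:
  fixes i k p n j l :: nat
  assumes "0 < n" "k < n" "p < n" "j < 2" "l < 2"
  shows "((i + (if j = 0 then k else n - k)) mod n + (if (j + l) mod 2 = 0 then p else n - p)) mod n
    = (i + (if j = 0 then (k + (if l = 0 then p else n - p)) mod n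
            else n - (k + (if l = 0 then p else n - p)) mod n)) mod n"
    (is "?lhs = ?rhs")
proof -
  let ?s = "\<lambda>j. (-1::int) ^ j"
  have "int ?lhs = ((int i + ?s j * int k) mod int n + ?s ((j + l) mod 2) * int p) mod int n"
    using assms by (simp add: dihedral_mult_rotation_part)
  also have "\<dots> = (int i + ?s j * (int k + ?s l * int p)) mod int n"
    using assms by (auto simp: less_2_cases_iff mod_simps algebra_simps)
  also have "\<dots> = (int i + ?s j * ((int k + ?s l * int p) mod int n)) mod int n"
    by (metis mod_add_right_eq mod_mult_right_eq)
  also have "\<dots> = int ?rhs"
    using assms by (simp add: dihedral_mult_rotation_part)
  finally show ?thesis by (simp only: of_nat_eq_iff)
qed

lemma group_dihedral:
  assumes "0 < n"
  shows "group (dihedral n)"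
proof (rule groupI)
  fix x y z
  assume "x \<in> carrier (dihedral n)" "y \<in> carrier (dihedral n)" "z \<in> carrier (dihedral n)"
  then show "x \<otimes>\<^bsub>dihedral n\<^esub> y \<otimes>\<^bsub>dihedral n\<^esub> z = x \<otimes>\<^bsub>dihedral n\<^esub> (y \<otimes>\<^bsub>dihedral n\<^esub> z)"
    using assms dihedral_mult_rotation_part_assoc
    by (auto simp: dihedral_carrier dihedral_mult mod_simps add.assoc)
next
  fix x
  assume x: "x \<in> carrier (dihedral n)"
  then obtain i j where ij: "x = (i, j)" "i < n" "j < 2"
    by (auto simp: dihedral_carrier)
  let ?y = "if j = 0 then ((n - i) mod n, 0) else (i, 1)"
  have "?y \<in> carrier (dihedral n) \<and> ?y \<otimes>\<^bsub>dihedral n\<^esub> x = \<one>\<^bsub>dihedral n\<^esub>"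
    using ij assms by (auto simp: dihedral_carrier dihedral_mult dihedral_one mod_simps less_2_cases_iff)
  then show "\<exists>y\<in>carrier (dihedral n). y \<otimes>\<^bsub>dihedral n\<^esub> x = \<one>\<^bsub>dihedral n\<^esub>" by blast
qed (use assms in \<open>auto simp: dihedral_carrier dihedral_mult dihedral_one\<close>)

lemma order_dihedral: "order (dihedral n) = 2 * n"
  by (simp add: order_def carrier_dihedral_eq_product)

lemma dihedral_rotation_pow:
  assumes "i < n"
  shows "(i, 0) [^]\<^bsub>dihedral n\<^esub> (m::nat) = (i * m mod n, 0)"
proof (induction m)
  case (Suc m)
  then show ?case by (simp add: dihedral_mult mod_simps algebra_simps)
qed (simp add: dihedral_one)

lemma dihedral_reflection_pow:
  assumes "i < n"
  shows "(i, 1) [^]\<^bsub>dihedral n\<^esub> (m::nat) = (if even m then (0, 0) else (i, 1))"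
proof (induction m)
  case (Suc m)
  then show ?case using assms by (auto simp: dihedral_mult)
qed (simp add: dihedral_one)

lemma dihedral_ord_rotation:
  assumes "i < n"
  shows "group.ord (dihedral n) (i, 0) = n div gcd i n"
proof -
  have "0 < n" using assms by simp
  interpret group "dihedral n" using group_dihedral[OF \<open>0 < n\<close>] .
  have "(i, 0) \<in> carrier (dihedral n)" using assms by (simp add: dihedral_carrier)
  moreover have "(i, 0) [^]\<^bsub>dihedral n\<^esub> m = \<one>\<^bsub>dihedral n\<^esub> \<longleftrightarrow> n div gcd i n dvd m" for m
  proof -
    have "(i, 0) [^]\<^bsub>dihedral n\<^esub> m = \<one>\<^bsub>dihedral n\<^esub> \<longleftrightarrow> n dvd i * m"
      by (simp add: dihedral_rotation_pow[OF assms] dihedral_one dvd_eq_mod_eq_0)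
    then show ?thesis using dvd_mult_iff_div_gcd_dvd[OF \<open>0 < n\<close>] by simp
  qed
  ultimately show ?thesis by (simp add: ord_unique)
qed

lemma dihedral_ord_reflection:
  assumes "i < n"
  shows "group.ord (dihedral n) (i, 1) = 2"
proof -
  interpret group "dihedral n" using group_dihedral assms by simp
  have "(i, 1) \<in> carrier (dihedral n)" using assms by (simp add: dihedral_carrier)
  then show ?thesis
    unfolding ord_unique[OF \<open>(i, 1) \<in> carrier (dihedral n)\<close>] dihedral_reflection_pow[OF assms] dihedral_one
    by simp
qed

lemma dihedral_ord_dvd_or_eq_2:
  assumes "x \<in> carrier (dihedral n)"
  shows "group.ord (dihedral n) x dvd n \<or> group.ord (dihedral n) x = 2"
proof -
  obtain i j where x: "x = (i, j)" "i < n" "j = 0 \<or> j = 1"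
    using assms by (auto simp: dihedral_carrier less_2_cases_iff)
  have "n div gcd i n dvd n"
    by (metis dvd_div_mult_self gcd_dvd2 dvd_triv_left)
  then show ?thesis
    using x dihedral_ord_rotation[OF x(2)] dihedral_ord_reflection[OF x(2)] by auto
qed

lemma dihedral_ord_rotation_coprime:
  assumes "0 < n" "d dvd n" "coprime j d" "j < d"
  shows "(n div d * j, 0) \<in> carrier (dihedral n)"
    and "group.ord (dihedral n) (n div d * j, 0) = d"
proof -
  obtain c where c: "n = c * d" using assms(2) by (metis dvdE mult.commute)
  then have "0 < c" "n div d = c" using assms(1) by auto
  then have lt: "n div d * j < n" using c assms(4) by simp
  then show "(n div d * j, 0) \<in> carrier (dihedral n)" by (simp add: dihedral_carrier)
  have "gcd (c * j) n = c * gcd j d" using c by (simp add: gcd_mult_distrib_nat)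
  then have "gcd (c * j) n = c" using assms(3) by simp
  then show "group.ord (dihedral n) (n div d * j, 0) = d"
    using dihedral_ord_rotation[OF lt] \<open>n div d = c\<close> c \<open>0 < c\<close> by simp
qed

lemma dihedral_elements_of_order_subset:
  assumes "0 < n" "d \<noteq> 2"
  shows "{x \<in> carrier (dihedral n). group.ord (dihedral n) x = d}
    \<subseteq> (\<lambda>j. (n div d * j, 0)) ` {j. j < d \<and> coprime j d}"
proof
  fix x assume x: "x \<in> {x \<in> carrier (dihedral n). group.ord (dihedral n) x = d}"
  then obtain i where i: "x = (i, 0)" "i < n"
    using assms(2) dihedral_ord_reflection by (auto simp: dihedral_carrier less_2_cases_iff)
  define g where "g = gcd i n"
  have "0 < g" using assms(1) by (simp add: g_def)
  have d: "d = n div g" using x i dihedral_ord_rotation g_def by auto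
  obtain j where j: "i = g * j" unfolding g_def by (metis gcd_dvd1 dvdE)
  have n: "n = g * d" using d unfolding g_def by simp
  then have "n div d = g" "j < d" using i j \<open>0 < g\<close> by auto
  moreover have "coprime j d"
    using div_gcd_coprime[of i n] assms(1) j d \<open>0 < g\<close> unfolding g_def[symmetric] by simp
  ultimately show "x \<in> (\<lambda>j. (n div d * j, 0)) ` {j. j < d \<and> coprime j d}"
    using i j by auto
qed

lemma card_dihedral_elements_of_order_le:
  assumes "0 < n" "d \<noteq> 2"
  shows "card {x \<in> carrier (dihedral n). group.ord (dihedral n) x = d}
    \<le> card {j. j < d \<and> coprime j d}"
proof -
  have "finite {j. j < d \<and> coprime j d}" by simp
  then have "card {x \<in> carrier (dihedral n). group.ord (dihedral n) x = d}
      \<le> card ((\<lambda>j. (n div d * j, 0::nat)) ` {j. j < d \<and> coprime j d})"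
    by (intro card_mono finite_imageI dihedral_elements_of_order_subset[OF assms])
  also have "\<dots> \<le> card {j. j < d \<and> coprime j d}"
    by (rule card_image_le) simp
  finally show ?thesis .
qed

lemma card_dihedral_elements_of_order_ge:
  assumes "0 < n" "d dvd n"
  shows "card {j. j < d \<and> coprime j d}
    \<le> card {x \<in> carrier (dihedral n). group.ord (dihedral n) x = d}"
proof (rule card_inj_on_le)
  have "0 < n div d"
    using assms by (metis bot_nat_0.not_eq_extremum mult_not_zero dvd_mult_div_cancel)
  then show "inj_on (\<lambda>j. (n div d * j, 0::nat)) {j. j < d \<and> coprime j d}"
    by (auto simp: inj_on_def)
  show "(\<lambda>j. (n div d * j, 0)) ` {j. j < d \<and> coprime j d}
      \<subseteq> {x \<in> carrier (dihedral n). group.ord (dihedral n) x = d}"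
    using dihedral_ord_rotation_coprime[OF assms] by auto
  show "finite {x \<in> carrier (dihedral n). group.ord (dihedral n) x = d}"
    by (simp add: carrier_dihedral_eq_product)
qed

lemma three_le_card_dihedral_reflections:
  assumes "3 \<le> n"
  shows "3 \<le> card {x \<in> carrier (dihedral n). group.ord (dihedral n) x = 2}"
proof -
  have "{(0, 1), (1, 1), (2, 1)} \<subseteq> {x \<in> carrier (dihedral n). group.ord (dihedral n) x = 2}"
    using assms dihedral_ord_reflection by (auto simp: dihedral_carrier)
  moreover have "finite {x \<in> carrier (dihedral n). group.ord (dihedral n) x = 2}"
    by (simp add: carrier_dihedral_eq_product)
  ultimately have "card {(0::nat, 1::nat), (1, 1), (2, 1)}
      \<le> card {x \<in> carrier (dihedral n). group.ord (dihedral n) x = 2}"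
    by (rule card_mono[rotated])
  then show ?thesis by simp
qed

lemma dihedral_not_cyclically_separable_if_power_of_two:
  assumes "n = 2 ^ k"
  shows "\<not> cyclically_separable (carrier (dihedral n)) (order_supergraph_adj (dihedral n))"
proof (rule not_cyclically_separable_if_complete[OF order_supergraph_adj_sym])
  interpret group "dihedral n" using group_dihedral assms by simp
  have "order (dihedral n) = 2 ^ Suc k" using order_dihedral assms by simp
  then show "clique (order_supergraph_adj (dihedral n)) (carrier (dihedral n))"
    unfolding clique_def using order_supergraph_adj_if_prime_power_order[OF two_is_prime_nat] by blast
qed

lemma dihedral_not_cyclically_separable_if_dvd_12:
  assumes "n dvd 12"
  shows "\<not> cyclically_separable (carrier (dihedral n)) (order_supergraph_adj (dihedral n))"
proof (rule order_supergraph_not_cyclically_separable_if_exponent_dvd_12)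
  have "0 < n" using assms by (auto intro: gr0I)
  show "finite (carrier (dihedral n))" by (simp add: carrier_dihedral_eq_product)
  show "group.ord (dihedral n) x dvd 12" if "x \<in> carrier (dihedral n)" for x
    using dihedral_ord_dvd_or_eq_2[OF that] dvd_trans[OF _ assms] by auto
  have "{j. j < (3::nat) \<and> coprime j 3} \<subseteq> {1, 2}"
    by (auto simp: less_Suc_eq numeral_eq_Suc)
  then show "card {x \<in> carrier (dihedral n). group.ord (dihedral n) x = 3} \<le> 2"
    using card_dihedral_elements_of_order_le[OF \<open>0 < n\<close>, of 3] card_le_2_if_subset_doubleton
    by fastforce
  have "{j. j < (4::nat) \<and> coprime j 4} \<subseteq> {1, 3}"
  proof
    fix j assume "j \<in> {j. j < (4::nat) \<and> coprime j 4}"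
    then have "j = 0 \<or> j = 1 \<or> j = 2 \<or> j = 3" "coprime j 4" by auto
    then show "j \<in> {1, 3}" by (auto simp: coprime_iff_gcd_eq_1 gcd_non_0_nat)
  qed
  then show "card {x \<in> carrier (dihedral n). group.ord (dihedral n) x = 4} \<le> 2"
    using card_dihedral_elements_of_order_le[OF \<open>0 < n\<close>, of 4] card_le_2_if_subset_doubleton
    by fastforce
qed

lemma dihedral_cyclically_separable_if_odd_divisor:
  assumes "0 < n" "odd m" "5 \<le> m" "m dvd n"
  shows "cyclically_separable (carrier (dihedral n)) (order_supergraph_adj (dihedral n))"
proof (rule order_supergraph_cyclically_separable_if_incomparable_orders)
  have "m \<le> n" using assms(1,4) by (simp add: dvd_imp_le)
  then show "3 \<le> card {x \<in> carrier (dihedral n). group.ord (dihedral n) x = 2}"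
    using assms(3) by (intro three_le_card_dihedral_reflections) simp
  have "{1, 2, 4} \<subseteq> {j. j < m \<and> coprime j m}"
    using assms(2,3) by (auto simp: coprime_power_left_iff[of 2 2, simplified])
  then have "3 \<le> card {j. j < m \<and> coprime j m}"
    by (rule three_le_card_if_three_elements) auto
  then show "3 \<le> card {x \<in> carrier (dihedral n). group.ord (dihedral n) x = m}"
    using card_dihedral_elements_of_order_ge[OF assms(1,4)] by simp
  show "\<not> 2 dvd m" "\<not> m dvd 2"
    using assms(2,3) by (auto dest: dvd_imp_le)
qed

lemma dihedral_cyclically_separable_if_24_dvd:
  assumes "0 < n" "24 dvd n"
  shows "cyclically_separable (carrier (dihedral n)) (order_supergraph_adj (dihedral n))"
proof (rule order_supergraph_cyclically_separable_if_incomparable_orders)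
  have "8 dvd n" "12 dvd n" using assms(2) by (auto intro: dvd_trans[rotated])
  have "{1, 3, 5} \<subseteq> {j. j < (8::nat) \<and> coprime j 8}"
    by (auto simp: coprime_iff_gcd_eq_1 gcd_non_0_nat)
  then have "3 \<le> card {j. j < (8::nat) \<and> coprime j 8}"
    by (rule three_le_card_if_three_elements) auto
  then show "3 \<le> card {x \<in> carrier (dihedral n). group.ord (dihedral n) x = 8}"
    using card_dihedral_elements_of_order_ge[OF assms(1) \<open>8 dvd n\<close>] by simp
  have "{1, 5, 7} \<subseteq> {j. j < (12::nat) \<and> coprime j 12}"
    by (auto simp: coprime_iff_gcd_eq_1 gcd_non_0_nat)
  then have "3 \<le> card {j. j < (12::nat) \<and> coprime j 12}"
    by (rule three_le_card_if_three_elements) auto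
  then show "3 \<le> card {x \<in> carrier (dihedral n). group.ord (dihedral n) x = 12}"
    using card_dihedral_elements_of_order_ge[OF assms(1) \<open>12 dvd n\<close>] by simp
qed simp_all

theorem mainTheorem1:
  fixes n :: nat
  assumes "n \<ge> 3"
  shows "cyclically_separable (carrier (dihedral n)) (order_supergraph_adj (dihedral n))
     \<longleftrightarrow> (\<not> (\<exists>k. n = 2 ^ k)) \<and> n \<ge> 5 \<and> n \<noteq> 6 \<and> n \<noteq> 12"
proof
  assume cs: "cyclically_separable (carrier (dihedral n)) (order_supergraph_adj (dihedral n))"
  have "\<nexists>k. n = 2 ^ k"
    using dihedral_not_cyclically_separable_if_power_of_two cs by blast
  moreover have "\<not> n dvd 12"
    using dihedral_not_cyclically_separable_if_dvd_12 cs by blast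
  then have "n \<noteq> 3" "n \<noteq> 4" "n \<noteq> 6" "n \<noteq> 12" by auto
  ultimately show "(\<nexists>k. n = 2 ^ k) \<and> n \<ge> 5 \<and> n \<noteq> 6 \<and> n \<noteq> 12"
    using assms by simp
next
  assume "(\<nexists>k. n = 2 ^ k) \<and> n \<ge> 5 \<and> n \<noteq> 6 \<and> n \<noteq> 12"
  then have "\<nexists>k. n = 2 ^ k" "\<not> n dvd 12" "0 < n"
    using divisors_12[of n] by auto
  then consider m where "odd m" "5 \<le> m" "m dvd n" | "24 dvd n"
    using odd_divisor_ge_5_or_24_dvd by blast
  then show "cyclically_separable (carrier (dihedral n)) (order_supergraph_adj (dihedral n))"
  proof cases
    case 1
    then show ?thesis using dihedral_cyclically_separable_if_odd_divisor \<open>0 < n\<close> by blast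
  next
    case 2
    then show ?thesis using dihedral_cyclically_separable_if_24_dvd \<open>0 < n\<close> by blast
  qed
qed

end
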